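(* Let $\varphi,\psi$ be non-negative locally finite Borel measures on $\mathbb R^d$ and let $f$ be a stable constrained density for $(\varphi,\psi)$. Let $X'$ be the set of unexhausted sites and $\Xi'$ the set of unsated centers. If $X'\neq\emptyset$ then $\psi(\Xi')<1$, and if $\Xi'\neq\emptyset$ then $\varphi(X')<1$. In particular, $\varphi(X')<1$ or $\psi(\Xi')<1$.
   Context: A non-negative measurable $f$ on $\mathbb R^d\times\mathbb R^d$ is a constrained density for $(\varphi,\psi)$ if $\int f(x,\xi)\psi(d\xi)\le1$ for all $x$, $\int f(x,\xi)\varphi(dx)\le 1$ for all $\xi$, and $f\le1$ everywhere. A site $x_0$ is exhausted if $\int f(x_0,\xi)\psi(d\xi)=1$ and unexhausted otherwise; a center $\xi_0$ is sated if $\int f(x,\xi_0)\varphi(dx)=1$ and unsated otherwise. $x_0$ desires $\xi_0$ if $f(x_0,\xi_0)<1$ and either $x_0$ is unexhausted or there is $\xi_1$ with $|x_0-\xi_1|>|x_0-\xi_0|$ and $f(x_0,\xi_1)>0$. $\xi_0$ desires $x_0$ if $f(x_0,\xi_0)<1$ and either $\xi_0$ is unsated or there is $x_1$ with $|x_1-\xi_0|>|x_0-\xi_0|$ and $f(x_1,\xi_0)>0$. $f$ is stable if no pair $(x_0,\xi_0)$ exists with $x_0$ desiring $\xi_0$ and $\xi_0$ desiring $x_0$. *)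

theory Defs
  imports "HOL-Analysis.Analysis"
begin

definition locally_finite_borel :: "'a::euclidean_space measure \<Rightarrow> bool" where
  "locally_finite_borel M \<longleftrightarrow> sets M = sets borel \<and>
     (\<forall>K. compact K \<longrightarrow> emeasure M K < \<infinity>)"

definition site_mass :: "'a measure \<Rightarrow> ('a \<Rightarrow> 'a \<Rightarrow> real) \<Rightarrow> 'a \<Rightarrow> ennreal" where
  "site_mass \<psi> f x = (\<integral>\<^sup>+ \<xi>. ennreal (f x \<xi>) \<partial>\<psi>)"

definition center_mass :: "'a measure \<Rightarrow> ('a \<Rightarrow> 'a \<Rightarrow> real) \<Rightarrow> 'a \<Rightarrow> ennreal" where
  "center_mass \<phi> f \<xi> = (\<integral>\<^sup>+ x. ennreal (f x \<xi>) \<partial>\<phi>)"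

definition constrained_density ::
  "'a::euclidean_space measure \<Rightarrow> 'a measure \<Rightarrow> ('a \<Rightarrow> 'a \<Rightarrow> real) \<Rightarrow> bool" where
  "constrained_density \<phi> \<psi> f \<longleftrightarrow>
     (\<lambda>(x, \<xi>). f x \<xi>) \<in> borel_measurable borel \<and>
     (\<forall>x \<xi>. 0 \<le> f x \<xi> \<and> f x \<xi> \<le> 1) \<and>
     (\<forall>x. site_mass \<psi> f x \<le> 1) \<and>
     (\<forall>\<xi>. center_mass \<phi> f \<xi> \<le> 1)"

definition exhausted :: "'a measure \<Rightarrow> ('a \<Rightarrow> 'a \<Rightarrow> real) \<Rightarrow> 'a \<Rightarrow> bool" where
  "exhausted \<psi> f x \<longleftrightarrow> site_mass \<psi> f x = 1"

definition sated :: "'a measure \<Rightarrow> ('a \<Rightarrow> 'a \<Rightarrow> real) \<Rightarrow> 'a \<Rightarrow> bool" where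
  "sated \<phi> f \<xi> \<longleftrightarrow> center_mass \<phi> f \<xi> = 1"

definition site_desires ::
  "'a::euclidean_space measure \<Rightarrow> ('a \<Rightarrow> 'a \<Rightarrow> real) \<Rightarrow> 'a \<Rightarrow> 'a \<Rightarrow> bool" where
  "site_desires \<psi> f x0 \<xi>0 \<longleftrightarrow> f x0 \<xi>0 < 1 \<and>
     (\<not> exhausted \<psi> f x0 \<or> (\<exists>\<xi>1. dist x0 \<xi>1 > dist x0 \<xi>0 \<and> f x0 \<xi>1 > 0))"

definition center_desires ::
  "'a::euclidean_space measure \<Rightarrow> ('a \<Rightarrow> 'a \<Rightarrow> real) \<Rightarrow> 'a \<Rightarrow> 'a \<Rightarrow> bool" where
  "center_desires \<phi> f \<xi>0 x0 \<longleftrightarrow> f x0 \<xi>0 < 1 \<and>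
     (\<not> sated \<phi> f \<xi>0 \<or> (\<exists>x1. dist x1 \<xi>0 > dist x0 \<xi>0 \<and> f x1 \<xi>0 > 0))"

definition stable ::
  "'a::euclidean_space measure \<Rightarrow> 'a measure \<Rightarrow> ('a \<Rightarrow> 'a \<Rightarrow> real) \<Rightarrow> bool" where
  "stable \<phi> \<psi> f \<longleftrightarrow>
     \<not> (\<exists>x0 \<xi>0. site_desires \<psi> f x0 \<xi>0 \<and> center_desires \<phi> f \<xi>0 x0)"

end

theory Submission
  imports Defs
begin

text \<open>An unexhausted site and an unsated center desire each other unless the density
  between them is already 1, so in a stable density every unexhausted site sends full
  mass to every unsated center.  Integrating the site's row (the center's column), whose
  total mass is below 1, then bounds the measure of the unsated centers (the unexhausted
  sites).\<close>

lemma emeasure_le_nn_integral_if_ge_one: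
  assumes "\<And>x. x \<in> S \<Longrightarrow> 1 \<le> g x"
  shows "emeasure M S \<le> (\<integral>\<^sup>+ x. g x \<partial>M)"
proof (cases "S \<in> sets M")
  \<comment> \<open>a non-measurable \<open>S\<close> has \<open>emeasure\<close> 0\<close>
  case True
  then have "emeasure M S = (\<integral>\<^sup>+ x. indicator S x \<partial>M)"
    by simp
  also have "\<dots> \<le> (\<integral>\<^sup>+ x. g x \<partial>M)"
    by (rule nn_integral_mono) (auto simp: indicator_def assms)
  finally show ?thesis .
qed (simp add: emeasure_notin_sets)

lemma stable_unexhausted_unsated_saturated:
  assumes "constrained_density \<phi> \<psi> f" and "stable \<phi> \<psi> f"
    and "\<not> exhausted \<psi> f x" and "\<not> sated \<phi> f \<xi>"
  shows "f x \<xi> = 1"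
proof (rule ccontr)
  assume "f x \<xi> \<noteq> 1"
  with assms(1) have "f x \<xi> < 1"
    unfolding constrained_density_def by (metis order_less_le)
  with assms(2-4) show False
    unfolding stable_def site_desires_def center_desires_def by auto
qed

lemma stable_unsated_measure_less_one:
  assumes "constrained_density \<phi> \<psi> f" and "stable \<phi> \<psi> f"
    and "\<not> exhausted \<psi> f x"
  shows "emeasure \<psi> {\<xi>. \<not> sated \<phi> f \<xi>} < 1"
proof -
  have "emeasure \<psi> {\<xi>. \<not> sated \<phi> f \<xi>} \<le> site_mass \<psi> f x"
    unfolding site_mass_def
    by (rule emeasure_le_nn_integral_if_ge_one)
       (simp add: stable_unexhausted_unsated_saturated[OF assms])
  also have "\<dots> < 1"
    using assms(1,3) unfolding exhausted_def constrained_density_def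
    by (metis order_less_le)
  finally show ?thesis .
qed

lemma stable_unexhausted_measure_less_one:
  assumes "constrained_density \<phi> \<psi> f" and "stable \<phi> \<psi> f"
    and "\<not> sated \<phi> f \<xi>"
  shows "emeasure \<phi> {x. \<not> exhausted \<psi> f x} < 1"
proof -
  have "emeasure \<phi> {x. \<not> exhausted \<psi> f x} \<le> center_mass \<phi> f \<xi>"
    unfolding center_mass_def
    by (rule emeasure_le_nn_integral_if_ge_one)
       (simp add: stable_unexhausted_unsated_saturated[OF assms(1,2) _ assms(3)])
  also have "\<dots> < 1"
    using assms(1,3) unfolding sated_def constrained_density_def
    by (metis order_less_le)
  finally show ?thesis .
qed

theorem mainTheorem6:
  fixes \<phi> \<psi> :: "'a::euclidean_space measure" and f :: "'a \<Rightarrow> 'a \<Rightarrow> real"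
  assumes "locally_finite_borel \<phi>" and "locally_finite_borel \<psi>"
    and "constrained_density \<phi> \<psi> f" and "stable \<phi> \<psi> f"
  defines "X' \<equiv> {x. \<not> exhausted \<psi> f x}" and "\<Xi>' \<equiv> {\<xi>. \<not> sated \<phi> f \<xi>}"
  shows "(X' \<noteq> {} \<longrightarrow> emeasure \<psi> \<Xi>' < 1) \<and> (\<Xi>' \<noteq> {} \<longrightarrow> emeasure \<phi> X' < 1)
         \<and> (emeasure \<phi> X' < 1 \<or> emeasure \<psi> \<Xi>' < 1)"
proof -
  have unsated: "X' \<noteq> {} \<longrightarrow> emeasure \<psi> \<Xi>' < 1"
    using stable_unsated_measure_less_one[OF assms(3,4)] unfolding X'_def \<Xi>'_def by blast
  have unexhausted: "\<Xi>' \<noteq> {} \<longrightarrow> emeasure \<phi> X' < 1"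
    using stable_unexhausted_measure_less_one[OF assms(3,4)] unfolding X'_def \<Xi>'_def by blast
  have "emeasure \<phi> X' < 1 \<or> emeasure \<psi> \<Xi>' < 1"
    using unsated by (cases "X' = {}") auto
  with unsated unexhausted show ?thesis by blast
qed

end
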